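(* Let $H$ and $K$ be finite groups and $G = H \times K$. Then: (i) $\eta(G) \ge \eta(H)\eta(K)$. (ii) If $\gcd(|H|,|K|) = 1$, then $\eta(G) = \eta(H)\eta(K)$. (iii) If $p$ is a prime dividing $|K|$ and $H$ is a nontrivial $p$-group, then $\eta(G) \ge \eta(H)\eta(K) + \eta_p(K) > \eta(H)\eta(K)$, where $\eta_p(K)$ is the number of conjugacy classes of maximal cyclic subgroups of $K$ whose order is divisible by $p$. (iv) If $H$ is nilpotent and a prime $p$ divides both $|H|$ and $|K|$, then $\eta(G) > \eta(K)$. (v) If $H$ and $K$ are both nontrivial $p$-groups for a prime $p$, then $\eta(G) \ge \eta(H)\eta(K) + \eta(H) + \eta(K)$.
   Context: A cyclic subgroup $C$ of a finite group $G$ is maximal cyclic if there is no cyclic subgroup $D$ of $G$ with $C < D$. $\eta(G)$ denotes the number of conjugacy classes of maximal cyclic subgroups of $G$. *)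

theory Defs
  imports "HOL-Algebra.Algebra"
begin

definition cyclic_subgroup :: "('a, 'b) monoid_scheme \<Rightarrow> 'a set \<Rightarrow> bool" where
  "cyclic_subgroup G C \<longleftrightarrow> (\<exists>x \<in> carrier G. C = generate G {x})"

definition max_cyclic_subgroup :: "('a, 'b) monoid_scheme \<Rightarrow> 'a set \<Rightarrow> bool" where
  "max_cyclic_subgroup G C \<longleftrightarrow> cyclic_subgroup G C \<and>
     \<not> (\<exists>D. cyclic_subgroup G D \<and> C \<subset> D)"

definition max_cyclic_subgroups :: "('a, 'b) monoid_scheme \<Rightarrow> 'a set set" where
  "max_cyclic_subgroups G = {C. max_cyclic_subgroup G C}"

definition conj_subset :: "('a, 'b) monoid_scheme \<Rightarrow> 'a \<Rightarrow> 'a set \<Rightarrow> 'a set" where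
  "conj_subset G g A = (\<lambda>a. g \<otimes>\<^bsub>G\<^esub> a \<otimes>\<^bsub>G\<^esub> inv\<^bsub>G\<^esub> g) ` A"

definition subset_conj_rel :: "('a, 'b) monoid_scheme \<Rightarrow> 'a set set \<Rightarrow> ('a set \<times> 'a set) set" where
  "subset_conj_rel G S = {(A, B). A \<in> S \<and> B \<in> S \<and> (\<exists>g \<in> carrier G. B = conj_subset G g A)}"

definition eta :: "('a, 'b) monoid_scheme \<Rightarrow> nat" where
  "eta G = card (max_cyclic_subgroups G // subset_conj_rel G (max_cyclic_subgroups G))"

definition eta_p :: "nat \<Rightarrow> ('a, 'b) monoid_scheme \<Rightarrow> nat" where
  "eta_p p G = (let S = {C \<in> max_cyclic_subgroups G. p dvd card C} in card (S // subset_conj_rel G S))"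

definition p_group :: "nat \<Rightarrow> ('a, 'b) monoid_scheme \<Rightarrow> bool" where
  "p_group p G \<longleftrightarrow> Factorial_Ring.prime p \<and> (\<exists>n. order G = p ^ n)"

definition commutator_subgroup :: "('a, 'b) monoid_scheme \<Rightarrow> 'a set \<Rightarrow> 'a set \<Rightarrow> 'a set" where
  "commutator_subgroup G A B = generate G
     (\<Union>a \<in> A. \<Union>b \<in> B. {a \<otimes>\<^bsub>G\<^esub> b \<otimes>\<^bsub>G\<^esub> inv\<^bsub>G\<^esub> a \<otimes>\<^bsub>G\<^esub> inv\<^bsub>G\<^esub> b})"

fun lower_central_series :: "('a, 'b) monoid_scheme \<Rightarrow> nat \<Rightarrow> 'a set" where
  "lower_central_series G 0 = carrier G"
| "lower_central_series G (Suc n) = commutator_subgroup G (lower_central_series G n) (carrier G)"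

definition nilpotent_group :: "('a, 'b) monoid_scheme \<Rightarrow> bool" where
  "nilpotent_group G \<longleftrightarrow> group G \<and> (\<exists>n. lower_central_series G n = {\<one>\<^bsub>G\<^esub>})"

end

(*
  A maximal cyclic subgroup C of H x K determines the pair of conjugacy classes of its
  projections fst ` C and snd ` C, and this pair depends only on the conjugacy class of C,
  so eta (H x K) is at least the number of pairs that occur.  Every pair of maximal cyclic
  subgroups A = <a>, B = <b> occurs: a maximal cyclic subgroup containing (a, b) projects onto
  A and B.  This gives (i).  For coprime orders every maximal cyclic subgroup is the product of
  its projections, so the pair also determines the class, which gives (ii).

  If (1, b) is a power (u, v)^k with <b> maximal cyclic, then <v> = <b>, so k is prime to the
  order of b while the order of u divides k.  Hence, for a p-group H and p dividing the order of
  b, the subgroup {1} x <b> is maximal cyclic; its pair has trivial first class, which does not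
  occur in (i).  This gives (iii) and, by symmetry, (v).  For (iv), a maximal cyclic subgroup
  containing (1, b) with p dividing the order of b has a first projection of order prime to p,
  so it and a maximal cyclic subgroup projecting onto some A with p dividing |A| give two
  different pairs over the same class of K.
*)

theory Submission
  imports Defs "HOL-Algebra.Sylow"
begin

definition nat_powers :: "('a, 'b) monoid_scheme \<Rightarrow> 'a \<Rightarrow> 'a set" where
  "nat_powers G x = range (\<lambda>n::nat. x [^]\<^bsub>G\<^esub> n)"

definition conj_class :: "('a, 'b) monoid_scheme \<Rightarrow> 'a set \<Rightarrow> 'a set set" where
  "conj_class G A = (\<lambda>g. conj_subset G g A) ` carrier G"

lemma quotient_subset_conj_rel:
  assumes "\<And>A g. A \<in> S \<Longrightarrow> g \<in> carrier G \<Longrightarrow> conj_subset G g A \<in> S"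
  shows "S // subset_conj_rel G S = conj_class G ` S"
proof -
  have "subset_conj_rel G S `` {A} = conj_class G A" if "A \<in> S" for A
    using that assms unfolding subset_conj_rel_def conj_class_def by auto
  then show ?thesis unfolding quotient_def by auto
qed

context group
begin

lemma generate_singleton_eq_nat_powers:
  assumes "finite (carrier G)" "x \<in> carrier G"
  shows "generate G {x} = nat_powers G x"
  using generate_pow_on_finite_carrier[OF assms] unfolding nat_powers_def by auto

lemma cyclic_subgroup_iff_nat_powers:
  assumes "finite (carrier G)"
  shows "cyclic_subgroup G C \<longleftrightarrow> (\<exists>x \<in> carrier G. C = nat_powers G x)"
  using generate_singleton_eq_nat_powers[OF assms] unfolding cyclic_subgroup_def by auto

lemma nat_powers_subset_carrier: "x \<in> carrier G \<Longrightarrow> nat_powers G x \<subseteq> carrier G"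
  unfolding nat_powers_def by auto

lemma mem_nat_powers_self: "x \<in> carrier G \<Longrightarrow> x \<in> nat_powers G x"
  unfolding nat_powers_def by (rule range_eqI[of _ _ 1]) simp

lemma one_mem_nat_powers: "\<one> \<in> nat_powers G x"
  unfolding nat_powers_def by (rule range_eqI[of _ _ 0]) simp

lemma nat_powers_one: "nat_powers G \<one> = {\<one>}"
  unfolding nat_powers_def by auto

lemma nat_powers_pow_subset:
  assumes "x \<in> carrier G"
  shows "nat_powers G (x [^] (k::nat)) \<subseteq> nat_powers G x"
  unfolding nat_powers_def using assms by (auto simp: nat_pow_pow)

lemma card_nat_powers:
  assumes "finite (carrier G)" "x \<in> carrier G"
  shows "card (nat_powers G x) = ord x"
  using generate_pow_card[OF assms(2)] generate_singleton_eq_nat_powers[OF assms] by simp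

lemma ord_dvd_of_mem_nat_powers:
  assumes "x \<in> carrier G" "y \<in> nat_powers G x"
  shows "ord y dvd ord x"
proof -
  obtain j :: nat where j: "y = x [^] j" using assms(2) unfolding nat_powers_def by auto
  have "y [^] ord x = (x [^] ord x) [^] j"
    by (simp only: j nat_pow_pow[OF assms(1)] mult.commute)
  then have "y [^] ord x = \<one>" using assms(1) by simp
  then show ?thesis using assms(1) j by (simp add: pow_eq_id)
qed

lemma coprime_exponent_if_nat_powers_pow_eq:
  assumes "finite (carrier G)" "x \<in> carrier G" "nat_powers G (x [^] (k::nat)) = nat_powers G x"
  shows "coprime k (ord x)"
proof -
  have "ord (x [^] k) = ord x"
    using assms card_nat_powers[OF assms(1)] by (metis nat_pow_closed)
  then show ?thesis using pow_ord_eq_ord_iff[OF assms(1,2)] by simp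
qed

lemma max_cyclic_subgroupE:
  assumes "finite (carrier G)" "max_cyclic_subgroup G C"
  obtains x where "x \<in> carrier G" "C = nat_powers G x"
  using assms(2) cyclic_subgroup_iff_nat_powers[OF assms(1)] that
  unfolding max_cyclic_subgroup_def by blast

lemma max_cyclic_subgroup_subset_carrier:
  assumes "finite (carrier G)" "max_cyclic_subgroup G C"
  shows "C \<subseteq> carrier G"
  using max_cyclic_subgroupE[OF assms] nat_powers_subset_carrier by blast

lemma max_cyclic_subgroup_nonempty:
  assumes "finite (carrier G)" "max_cyclic_subgroup G C"
  shows "C \<noteq> {}"
  using max_cyclic_subgroupE[OF assms] one_mem_nat_powers by blast

lemma max_cyclic_subgroup_nat_powers_eq:
  assumes "finite (carrier G)" "max_cyclic_subgroup G C" "x \<in> carrier G" "C \<subseteq> nat_powers G x"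
  shows "nat_powers G x = C"
proof -
  have "cyclic_subgroup G (nat_powers G x)" using cyclic_subgroup_iff_nat_powers[OF assms(1)] assms(3) by blast
  then show ?thesis using assms(2,4) unfolding max_cyclic_subgroup_def by blast
qed

lemma max_cyclic_subgroupI:
  assumes "finite (carrier G)" "x \<in> carrier G"
    and "\<And>y. y \<in> carrier G \<Longrightarrow> nat_powers G x \<subseteq> nat_powers G y \<Longrightarrow> nat_powers G y = nat_powers G x"
  shows "max_cyclic_subgroup G (nat_powers G x)"
  unfolding max_cyclic_subgroup_def cyclic_subgroup_iff_nat_powers[OF assms(1)]
  using assms(2,3) by blast

lemma ex_max_cyclic_subgroup_supset:
  assumes "finite (carrier G)" "x \<in> carrier G"
  obtains C where "max_cyclic_subgroup G C" "nat_powers G x \<subseteq> C"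
proof -
  let ?F = "{D. cyclic_subgroup G D \<and> nat_powers G x \<subseteq> D}"
  have "?F \<subseteq> Pow (carrier G)"
    using cyclic_subgroup_iff_nat_powers[OF assms(1)] nat_powers_subset_carrier by blast
  then have "finite ?F" using assms(1) finite_subset by blast
  moreover have "nat_powers G x \<in> ?F"
    using cyclic_subgroup_iff_nat_powers[OF assms(1)] assms(2) by blast
  ultimately obtain D where D: "D \<in> ?F" "\<forall>D' \<in> ?F. D \<subseteq> D' \<longrightarrow> D = D'"
    using finite_has_maximal2[of ?F] by blast
  have "max_cyclic_subgroup G D"
    unfolding max_cyclic_subgroup_def
  proof (intro conjI notI)
    show "cyclic_subgroup G D" using D(1) by blast
  next
    assume "\<exists>D'. cyclic_subgroup G D' \<and> D \<subset> D'"
    then show False using D by blast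
  qed
  then show thesis using that D(1) by blast
qed

lemma finite_max_cyclic_subgroups:
  assumes "finite (carrier G)"
  shows "finite (max_cyclic_subgroups G)"
proof (rule finite_subset)
  show "max_cyclic_subgroups G \<subseteq> Pow (carrier G)"
    using max_cyclic_subgroup_subset_carrier[OF assms] unfolding max_cyclic_subgroups_def by blast
qed (use assms in simp)

lemma max_cyclic_subgroup_neq_one:
  assumes "finite (carrier G)" "order G > 1" "max_cyclic_subgroup G C"
  shows "C \<noteq> {\<one>}"
proof
  assume C: "C = {\<one>}"
  have "\<not> carrier G \<subseteq> {\<one>}"
    using assms(2) card_mono[of "{\<one>}" "carrier G"] unfolding order_def by auto
  then obtain h where h: "h \<in> carrier G" "h \<noteq> \<one>" by blast
  then have "nat_powers G h = C"
    using max_cyclic_subgroup_nat_powers_eq[OF assms(1,3)] C one_mem_nat_powers by blast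
  then show False using mem_nat_powers_self[OF h(1)] h(2) C by blast
qed

lemma prime_dvd_card_max_cyclic_subgroup:
  assumes "finite (carrier G)" "Factorial_Ring.prime p" "order G = p ^ n" "order G > 1" "max_cyclic_subgroup G C"
  shows "p dvd card C"
proof -
  obtain x where x: "x \<in> carrier G" "C = nat_powers G x" using max_cyclic_subgroupE[OF assms(1,5)] .
  have "x \<noteq> \<one>" using max_cyclic_subgroup_neq_one[OF assms(1,4,5)] x(2) nat_powers_one by blast
  then have "ord x \<noteq> 1" using ord_eq_1[OF x(1)] by simp
  moreover obtain i where "ord x = p ^ i"
    using ord_dvd_group_order[OF x(1)] assms(3) divides_primepow_nat[OF assms(2)] by auto
  ultimately have "p dvd ord x" by (cases i) auto
  then show ?thesis using card_nat_powers[OF assms(1) x(1)] x(2) by simp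
qed

lemma ex_ord_eq_prime:
  assumes "finite (carrier G)" "Factorial_Ring.prime p" "p dvd order G"
  obtains x where "x \<in> carrier G" "ord x = p"
proof -
  have "order G = p ^ 1 * (order G div p)" using assms(3) by simp
  then obtain P where P: "subgroup P G" "card P = p"
    using sylow_thm[OF assms(2) is_group _ assms(1)] by (metis power_one_right)
  interpret P: group "G\<lparr>carrier := P\<rparr>" using subgroup_imp_group[OF P(1)] .
  have "card P > 1" using P(2) prime_gt_1_nat[OF assms(2)] by simp
  have "\<not> P \<subseteq> {\<one>}"
  proof
    assume "P \<subseteq> {\<one>}"
    then have "card P \<le> 1" using card_mono[of "{\<one>}" P] by simp
    with \<open>card P > 1\<close> show False by simp
  qed
  then obtain x where x: "x \<in> P" "x \<noteq> \<one>" by blast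
  have xG: "x \<in> carrier G" using subgroup.mem_carrier[OF P(1) x(1)] .
  have "x [^]\<^bsub>G\<lparr>carrier := P\<rparr>\<^esub> order (G\<lparr>carrier := P\<rparr>) = \<one>"
    using P.pow_order_eq_1 x(1) by simp
  then have "x [^] p = \<one>" using P(2) unfolding order_def by (simp flip: nat_pow_consistent)
  then have "ord x dvd p" using pow_eq_id[OF xG] by simp
  moreover have "ord x \<noteq> 1" using ord_eq_1[OF xG] x(2) by simp
  ultimately have "ord x = p" using assms(2) unfolding prime_nat_iff by auto
  then show thesis using xG that by blast
qed

lemma ex_max_cyclic_subgroup_prime_dvd_card:
  assumes "finite (carrier G)" "Factorial_Ring.prime p" "p dvd order G"
  obtains C where "max_cyclic_subgroup G C" "p dvd card C"
proof -
  obtain x where x: "x \<in> carrier G" "ord x = p" using ex_ord_eq_prime[OF assms] .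
  obtain C where C: "max_cyclic_subgroup G C" "nat_powers G x \<subseteq> C"
    using ex_max_cyclic_subgroup_supset[OF assms(1) x(1)] .
  obtain c where c: "c \<in> carrier G" "C = nat_powers G c" using max_cyclic_subgroupE[OF assms(1) C(1)] .
  have "p dvd ord c"
    using ord_dvd_of_mem_nat_powers[OF c(1)] C(2) c(2) mem_nat_powers_self[OF x(1)] x(2) by blast
  then show thesis using that C(1) card_nat_powers[OF assms(1) c(1)] c(2) by simp
qed

lemma conj_subset_one:
  assumes "A \<subseteq> carrier G"
  shows "conj_subset G \<one> A = A"
  using assms unfolding conj_subset_def by (auto simp: image_def subset_iff)

lemma conj_subset_conj_subset:
  assumes "A \<subseteq> carrier G" "g \<in> carrier G" "h \<in> carrier G"
  shows "conj_subset G h (conj_subset G g A) = conj_subset G (h \<otimes> g) A"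
proof -
  have "h \<otimes> (g \<otimes> a \<otimes> inv g) \<otimes> inv h = h \<otimes> g \<otimes> a \<otimes> inv (h \<otimes> g)" if "a \<in> A" for a
    using assms that by (auto simp: inv_mult_group m_assoc)
  then show ?thesis unfolding conj_subset_def image_image by auto
qed

lemma conj_subset_inv:
  assumes "A \<subseteq> carrier G" "g \<in> carrier G"
  shows "conj_subset G (inv g) (conj_subset G g A) = A"
  using assms by (simp add: conj_subset_conj_subset conj_subset_one)

lemma card_conj_subset:
  assumes "A \<subseteq> carrier G" "g \<in> carrier G"
  shows "card (conj_subset G g A) = card A"
proof -
  have "inj_on (\<lambda>a. g \<otimes> a \<otimes> inv g) (carrier G)"
    by (rule inj_onI) (use assms(2) in auto)
  then have "inj_on (\<lambda>a. g \<otimes> a \<otimes> inv g) A" using assms(1) by (rule inj_on_subset)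
  then show ?thesis unfolding conj_subset_def by (rule card_image)
qed

lemma self_mem_conj_class: "A \<subseteq> carrier G \<Longrightarrow> A \<in> conj_class G A"
  unfolding conj_class_def by (rule image_eqI[where x = \<one>]) (simp_all add: conj_subset_one)

lemma card_eq_if_conj_class_eq:
  assumes "A \<subseteq> carrier G" "B \<subseteq> carrier G" "conj_class G A = conj_class G B"
  shows "card A = card B"
proof -
  have "B \<in> conj_class G A" using self_mem_conj_class[OF assms(2)] assms(3) by simp
  then obtain g where "g \<in> carrier G" "B = conj_subset G g A" unfolding conj_class_def by blast
  then show ?thesis using card_conj_subset[OF assms(1)] by simp
qed

lemma conj_class_one: "conj_class G {\<one>} = {{\<one>}}"
  unfolding conj_class_def conj_subset_def by auto

lemma conj_nat_pow:
  assumes "g \<in> carrier G" "w \<in> carrier G"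
  shows "(g \<otimes> w \<otimes> inv g) [^] (n::nat) = g \<otimes> w [^] n \<otimes> inv g"
proof (induction n)
  case (Suc n)
  have "(g \<otimes> w \<otimes> inv g) [^] Suc n = g \<otimes> w [^] n \<otimes> inv g \<otimes> (g \<otimes> w \<otimes> inv g)"
    using Suc by simp
  also have "\<dots> = g \<otimes> (w [^] n \<otimes> w) \<otimes> inv g"
    using assms by (simp add: m_assoc) (simp add: m_assoc[symmetric])
  finally show ?case by simp
qed (use assms in simp)

lemma conj_subset_nat_powers:
  assumes "g \<in> carrier G" "w \<in> carrier G"
  shows "conj_subset G g (nat_powers G w) = nat_powers G (g \<otimes> w \<otimes> inv g)"
  unfolding conj_subset_def nat_powers_def image_image conj_nat_pow[OF assms] ..

lemma max_cyclic_subgroup_conj_subset: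
  assumes "finite (carrier G)" "max_cyclic_subgroup G C" "g \<in> carrier G"
  shows "max_cyclic_subgroup G (conj_subset G g C)"
proof -
  obtain x where x: "x \<in> carrier G" "C = nat_powers G x" using max_cyclic_subgroupE[OF assms(1,2)] .
  have "max_cyclic_subgroup G (nat_powers G (g \<otimes> x \<otimes> inv g))"
  proof (rule max_cyclic_subgroupI[OF assms(1)])
    fix y assume y: "y \<in> carrier G" "nat_powers G (g \<otimes> x \<otimes> inv g) \<subseteq> nat_powers G y"
    let ?y' = "inv g \<otimes> y \<otimes> inv (inv g)"
    have "C = conj_subset G (inv g) (conj_subset G g C)"
      using conj_subset_inv[OF _ assms(3)] x nat_powers_subset_carrier by simp
    also have "\<dots> \<subseteq> conj_subset G (inv g) (nat_powers G y)"
      using y(2) x assms(3) conj_subset_nat_powers unfolding conj_subset_def[of G "inv g"]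
      by (intro image_mono) simp
    also have "\<dots> = nat_powers G ?y'"
      using assms(3) y(1) by (simp add: conj_subset_nat_powers)
    finally have "nat_powers G ?y' = C"
      using max_cyclic_subgroup_nat_powers_eq[OF assms(1,2)] assms(3) y(1) by simp
    then have "conj_subset G g (conj_subset G (inv g) (nat_powers G y)) = conj_subset G g C"
      using assms(3) y(1) by (simp add: conj_subset_nat_powers)
    then show "nat_powers G y = nat_powers G (g \<otimes> x \<otimes> inv g)"
      using conj_subset_inv[of "nat_powers G y" "inv g"] nat_powers_subset_carrier[OF y(1)] assms(3) x
      by (simp add: conj_subset_nat_powers)
  qed (use assms(3) x(1) in simp)
  then show ?thesis using conj_subset_nat_powers[OF assms(3) x(1)] x(2) by simp
qed

lemma eta_eq_card_conj_classes:
  assumes "finite (carrier G)"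
  shows "eta G = card (conj_class G ` max_cyclic_subgroups G)"
  unfolding eta_def
  by (subst quotient_subset_conj_rel)
     (auto simp: max_cyclic_subgroups_def intro: max_cyclic_subgroup_conj_subset[OF assms])

lemma eta_p_eq_card_conj_classes:
  assumes "finite (carrier G)"
  shows "eta_p p G = card (conj_class G ` {C \<in> max_cyclic_subgroups G. p dvd card C})"
  unfolding eta_p_def Let_def
  by (subst quotient_subset_conj_rel)
     (auto simp: max_cyclic_subgroups_def card_conj_subset max_cyclic_subgroup_subset_carrier[OF assms]
           intro: max_cyclic_subgroup_conj_subset[OF assms])

lemma one_conj_class_notin_conj_classes:
  assumes "finite (carrier G)" "order G > 1"
  shows "{{\<one>}} \<notin> conj_class G ` max_cyclic_subgroups G"
proof
  assume "{{\<one>}} \<in> conj_class G ` max_cyclic_subgroups G"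
  then obtain C where C: "max_cyclic_subgroup G C" "conj_class G C = {{\<one>}}"
    unfolding max_cyclic_subgroups_def by auto
  then have "C = {\<one>}" using self_mem_conj_class max_cyclic_subgroup_subset_carrier[OF assms(1)] by blast
  then show False using max_cyclic_subgroup_neq_one[OF assms C(1)] by simp
qed

lemma eta_p_pos:
  assumes "finite (carrier G)" "Factorial_Ring.prime p" "p dvd order G"
  shows "eta_p p G > 0"
proof -
  obtain C where "max_cyclic_subgroup G C" "p dvd card C"
    using ex_max_cyclic_subgroup_prime_dvd_card[OF assms] .
  then have "conj_class G ` {C \<in> max_cyclic_subgroups G. p dvd card C} \<noteq> {}"
    unfolding max_cyclic_subgroups_def by blast
  moreover have "finite {C \<in> max_cyclic_subgroups G. p dvd card C}"
    using finite_max_cyclic_subgroups[OF assms(1)] by simp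
  ultimately show ?thesis using eta_p_eq_card_conj_classes[OF assms(1)] by (simp add: card_gt_0_iff)
qed

end

lemma DirProd_nat_pow: "(u, v) [^]\<^bsub>H \<times>\<times> K\<^esub> (n::nat) = (u [^]\<^bsub>H\<^esub> n, v [^]\<^bsub>K\<^esub> n)"
  by (induction n) simp_all

lemma nat_powers_DirProd:
  "nat_powers (H \<times>\<times> K) (u, v) = (\<lambda>n::nat. (u [^]\<^bsub>H\<^esub> n, v [^]\<^bsub>K\<^esub> n)) ` UNIV"
  unfolding nat_powers_def by (rule image_cong) (simp_all add: DirProd_nat_pow)

lemma fst_nat_powers_DirProd: "fst ` nat_powers (H \<times>\<times> K) (u, v) = nat_powers H u"
  by (simp only: nat_powers_DirProd image_image fst_conv) (simp add: nat_powers_def)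

lemma snd_nat_powers_DirProd: "snd ` nat_powers (H \<times>\<times> K) (u, v) = nat_powers K v"
  by (simp only: nat_powers_DirProd image_image snd_conv) (simp add: nat_powers_def)

lemma swap_nat_powers_DirProd: "prod.swap ` nat_powers (H \<times>\<times> K) (u, v) = nat_powers (K \<times>\<times> H) (v, u)"
  unfolding nat_powers_DirProd image_image by simp

definition proj_conj_classes ::
    "('a, 'c) monoid_scheme \<Rightarrow> ('b, 'd) monoid_scheme \<Rightarrow> ('a \<times> 'b) set \<Rightarrow> 'a set set \<times> 'b set set" where
  "proj_conj_classes H K C = (conj_class H (fst ` C), conj_class K (snd ` C))"

locale two_finite_groups = H: group H + K: group K
  for H :: "('a, 'c) monoid_scheme" and K :: "('b, 'd) monoid_scheme" +
  assumes finite_H: "finite (carrier H)" and finite_K: "finite (carrier K)"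
begin

sublocale HK: group "H \<times>\<times> K"
  by (rule DirProd_group) unfold_locales

lemma finite_HK: "finite (carrier (H \<times>\<times> K))"
  using finite_H finite_K by simp

lemma nat_powers_DirProd_one_left: "nat_powers (H \<times>\<times> K) (\<one>\<^bsub>H\<^esub>, v) = {\<one>\<^bsub>H\<^esub>} \<times> nat_powers K v"
  unfolding nat_powers_DirProd by (auto simp: nat_powers_def)

lemma ord_DirProd:
  assumes "u \<in> carrier H" "v \<in> carrier K"
  shows "HK.ord (u, v) = lcm (H.ord u) (K.ord v)"
  using assms by (simp add: HK.ord_unique DirProd_nat_pow H.pow_eq_id K.pow_eq_id)

lemma nat_powers_DirProd_coprime:
  assumes "u \<in> carrier H" "v \<in> carrier K" "coprime (H.ord u) (K.ord v)"
  shows "nat_powers (H \<times>\<times> K) (u, v) = nat_powers H u \<times> nat_powers K v"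
proof (rule card_seteq)
  show "finite (nat_powers H u \<times> nat_powers K v)"
    using finite_H finite_K H.nat_powers_subset_carrier[OF assms(1)] K.nat_powers_subset_carrier[OF assms(2)]
    by (auto intro: finite_subset)
  show "nat_powers (H \<times>\<times> K) (u, v) \<subseteq> nat_powers H u \<times> nat_powers K v"
    unfolding nat_powers_DirProd by (auto simp: nat_powers_def)
  have "card (nat_powers H u \<times> nat_powers K v) = H.ord u * K.ord v"
    using H.card_nat_powers[OF finite_H assms(1)] K.card_nat_powers[OF finite_K assms(2)]
    by (simp add: card_cartesian_product)
  also have "\<dots> = card (nat_powers (H \<times>\<times> K) (u, v))"
    using HK.card_nat_powers[OF finite_HK] assms ord_DirProd lcm_coprime[OF assms(3)] by simp
  finally show "card (nat_powers H u \<times> nat_powers K v) \<le> card (nat_powers (H \<times>\<times> K) (u, v))"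
    by simp
qed

lemma conj_subset_DirProd:
  assumes "g \<in> carrier H" "k \<in> carrier K"
  shows "conj_subset (H \<times>\<times> K) (g, k) C
    = map_prod (\<lambda>x. g \<otimes>\<^bsub>H\<^esub> x \<otimes>\<^bsub>H\<^esub> inv\<^bsub>H\<^esub> g) (\<lambda>y. k \<otimes>\<^bsub>K\<^esub> y \<otimes>\<^bsub>K\<^esub> inv\<^bsub>K\<^esub> k) ` C"
  unfolding conj_subset_def using assms by (intro image_cong) (auto simp: inv_DirProd)

lemma fst_conj_subset_DirProd:
  assumes "g \<in> carrier H" "k \<in> carrier K"
  shows "fst ` conj_subset (H \<times>\<times> K) (g, k) C = conj_subset H g (fst ` C)"
  unfolding conj_subset_DirProd[OF assms] by (simp add: conj_subset_def image_image)

lemma snd_conj_subset_DirProd: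
  assumes "g \<in> carrier H" "k \<in> carrier K"
  shows "snd ` conj_subset (H \<times>\<times> K) (g, k) C = conj_subset K k (snd ` C)"
  unfolding conj_subset_DirProd[OF assms] by (simp add: conj_subset_def image_image)

lemma conj_subset_DirProd_Times:
  assumes "g \<in> carrier H" "k \<in> carrier K"
  shows "conj_subset (H \<times>\<times> K) (g, k) (A \<times> B) = conj_subset H g A \<times> conj_subset K k B"
  unfolding conj_subset_DirProd[OF assms] by (simp add: conj_subset_def map_prod_surj_on)

lemma conj_class_DirProd_fst: "(`) fst ` conj_class (H \<times>\<times> K) C = conj_class H (fst ` C)"
proof -
  have "fst ` conj_subset (H \<times>\<times> K) z C = conj_subset H (fst z) (fst ` C)"
    if "z \<in> carrier (H \<times>\<times> K)" for z
    using that by (cases z) (simp add: fst_conj_subset_DirProd)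
  then have "(`) fst ` conj_class (H \<times>\<times> K) C = (\<lambda>z. conj_subset H (fst z) (fst ` C)) ` (carrier H \<times> carrier K)"
    unfolding conj_class_def image_image by (intro image_cong) auto
  also have "\<dots> = conj_class H (fst ` C)"
    unfolding conj_class_def using K.one_closed by force
  finally show ?thesis .
qed

lemma conj_class_DirProd_snd: "(`) snd ` conj_class (H \<times>\<times> K) C = conj_class K (snd ` C)"
proof -
  have "snd ` conj_subset (H \<times>\<times> K) z C = conj_subset K (snd z) (snd ` C)"
    if "z \<in> carrier (H \<times>\<times> K)" for z
    using that by (cases z) (simp add: snd_conj_subset_DirProd)
  then have "(`) snd ` conj_class (H \<times>\<times> K) C = (\<lambda>z. conj_subset K (snd z) (snd ` C)) ` (carrier H \<times> carrier K)"
    unfolding conj_class_def image_image by (intro image_cong) auto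
  also have "\<dots> = conj_class K (snd ` C)"
    unfolding conj_class_def using H.one_closed by force
  finally show ?thesis .
qed

lemma conj_class_DirProd_Times:
  "conj_class (H \<times>\<times> K) (A \<times> B) = (\<lambda>(P, Q). P \<times> Q) ` (conj_class H A \<times> conj_class K B)"
proof -
  have "conj_class (H \<times>\<times> K) (A \<times> B)
      = (\<lambda>(P, Q). P \<times> Q) ` map_prod (\<lambda>g. conj_subset H g A) (\<lambda>k. conj_subset K k B) ` (carrier H \<times> carrier K)"
    unfolding conj_class_def image_image
    by (intro image_cong) (auto simp: conj_subset_DirProd_Times)
  then show ?thesis unfolding conj_class_def by (simp add: map_prod_surj_on)
qed

lemma max_cyclic_subgroup_DirProdE:
  assumes "max_cyclic_subgroup (H \<times>\<times> K) C"
  obtains u v where "u \<in> carrier H" "v \<in> carrier K" "C = nat_powers (H \<times>\<times> K) (u, v)"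
proof -
  obtain z where "z \<in> carrier (H \<times>\<times> K)" "C = nat_powers (H \<times>\<times> K) z"
    using HK.max_cyclic_subgroupE[OF finite_HK assms] .
  moreover obtain u v where "z = (u, v)" by (cases z)
  ultimately show thesis using that[of u v] by simp
qed

lemma ex_max_cyclic_subgroup_DirProd_projections:
  assumes "max_cyclic_subgroup H A" "max_cyclic_subgroup K B"
  obtains C where "max_cyclic_subgroup (H \<times>\<times> K) C" "fst ` C = A" "snd ` C = B"
proof -
  obtain a where a: "a \<in> carrier H" "A = nat_powers H a" using H.max_cyclic_subgroupE[OF finite_H assms(1)] .
  obtain b where b: "b \<in> carrier K" "B = nat_powers K b" using K.max_cyclic_subgroupE[OF finite_K assms(2)] .
  obtain C where C: "max_cyclic_subgroup (H \<times>\<times> K) C" "nat_powers (H \<times>\<times> K) (a, b) \<subseteq> C"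
    using HK.ex_max_cyclic_subgroup_supset[OF finite_HK, of "(a, b)"] a(1) b(1) by auto
  obtain u v where uv: "u \<in> carrier H" "v \<in> carrier K" "C = nat_powers (H \<times>\<times> K) (u, v)"
    using max_cyclic_subgroup_DirProdE[OF C(1)] .
  have "A \<subseteq> nat_powers H u"
    using image_mono[OF C(2), of fst] a(2) uv(3) by (simp add: fst_nat_powers_DirProd)
  then have "nat_powers H u = A" by (rule H.max_cyclic_subgroup_nat_powers_eq[OF finite_H assms(1) uv(1)])
  moreover have "B \<subseteq> nat_powers K v"
    using image_mono[OF C(2), of snd] b(2) uv(3) by (simp add: snd_nat_powers_DirProd)
  then have "nat_powers K v = B" by (rule K.max_cyclic_subgroup_nat_powers_eq[OF finite_K assms(2) uv(2)])
  ultimately show thesis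
    using that C(1) uv(3) by (simp add: fst_nat_powers_DirProd snd_nat_powers_DirProd)
qed

lemma max_cyclic_subgroup_DirProd_coprime:
  assumes "coprime (order H) (order K)" "max_cyclic_subgroup (H \<times>\<times> K) C"
  shows "C = fst ` C \<times> snd ` C" "max_cyclic_subgroup H (fst ` C)" "max_cyclic_subgroup K (snd ` C)"
proof -
  have Times: "nat_powers (H \<times>\<times> K) (x, y) = nat_powers H x \<times> nat_powers K y"
    if "x \<in> carrier H" "y \<in> carrier K" for x y
    using nat_powers_DirProd_coprime[OF that] that
      coprime_divisors[OF H.ord_dvd_group_order K.ord_dvd_group_order assms(1)] by blast
  obtain u v where uv: "u \<in> carrier H" "v \<in> carrier K" "C = nat_powers (H \<times>\<times> K) (u, v)"
    using max_cyclic_subgroup_DirProdE[OF assms(2)] .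
  have fst_C: "fst ` C = nat_powers H u" and snd_C: "snd ` C = nat_powers K v"
    using uv(3) by (simp_all add: fst_nat_powers_DirProd snd_nat_powers_DirProd)
  show "C = fst ` C \<times> snd ` C" using Times[OF uv(1,2)] uv(3) fst_C snd_C by simp
  have "max_cyclic_subgroup H (nat_powers H u)"
  proof (rule H.max_cyclic_subgroupI[OF finite_H uv(1)])
    fix x assume x: "x \<in> carrier H" "nat_powers H u \<subseteq> nat_powers H x"
    then have "C \<subseteq> nat_powers (H \<times>\<times> K) (x, v)" using Times uv by auto
    then have "nat_powers (H \<times>\<times> K) (x, v) = C"
      using HK.max_cyclic_subgroup_nat_powers_eq[OF finite_HK assms(2)] x(1) uv(2) by simp
    then show "nat_powers H x = nat_powers H u" using fst_C fst_nat_powers_DirProd by metis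
  qed
  then show "max_cyclic_subgroup H (fst ` C)" using fst_C by simp
  have "max_cyclic_subgroup K (nat_powers K v)"
  proof (rule K.max_cyclic_subgroupI[OF finite_K uv(2)])
    fix y assume y: "y \<in> carrier K" "nat_powers K v \<subseteq> nat_powers K y"
    then have "C \<subseteq> nat_powers (H \<times>\<times> K) (u, y)" using Times uv by auto
    then have "nat_powers (H \<times>\<times> K) (u, y) = C"
      using HK.max_cyclic_subgroup_nat_powers_eq[OF finite_HK assms(2)] y(1) uv(1) by simp
    then show "nat_powers K y = nat_powers K v" using snd_C snd_nat_powers_DirProd by metis
  qed
  then show "max_cyclic_subgroup K (snd ` C)" using snd_C by simp
qed

lemma max_cyclic_subgroup_swap:
  assumes "max_cyclic_subgroup (H \<times>\<times> K) C"
  shows "max_cyclic_subgroup (K \<times>\<times> H) (prod.swap ` C)"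
proof -
  interpret KH: group "K \<times>\<times> H" using DirProd_group[OF K.is_group H.is_group] .
  have finite_KH: "finite (carrier (K \<times>\<times> H))" using finite_H finite_K by simp
  obtain u v where uv: "u \<in> carrier H" "v \<in> carrier K" "C = nat_powers (H \<times>\<times> K) (u, v)"
    using max_cyclic_subgroup_DirProdE[OF assms] .
  have "max_cyclic_subgroup (K \<times>\<times> H) (nat_powers (K \<times>\<times> H) (v, u))"
  proof (rule KH.max_cyclic_subgroupI[OF finite_KH])
    fix z assume z: "z \<in> carrier (K \<times>\<times> H)" "nat_powers (K \<times>\<times> H) (v, u) \<subseteq> nat_powers (K \<times>\<times> H) z"
    obtain y x where yx: "z = (y, x)" "y \<in> carrier K" "x \<in> carrier H" using z(1) by (cases z) simp
    have "C \<subseteq> nat_powers (H \<times>\<times> K) (x, y)"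
      using image_mono[OF z(2), of prod.swap] uv(3) yx(1) by (simp add: swap_nat_powers_DirProd)
    then have "nat_powers (H \<times>\<times> K) (x, y) = C"
      using HK.max_cyclic_subgroup_nat_powers_eq[OF finite_HK assms] yx(2,3) by simp
    then show "nat_powers (K \<times>\<times> H) z = nat_powers (K \<times>\<times> H) (v, u)"
      using yx(1) uv(3) swap_nat_powers_DirProd by metis
  qed (use uv in simp)
  then show ?thesis using uv(3) by (simp add: swap_nat_powers_DirProd)
qed

lemma one_pair_mem_nat_powers_DirProd:
  assumes "b \<in> carrier K" "max_cyclic_subgroup K (nat_powers K b)"
    and "u \<in> carrier H" "v \<in> carrier K" "(\<one>\<^bsub>H\<^esub>, b) \<in> nat_powers (H \<times>\<times> K) (u, v)"
  shows "nat_powers K v = nat_powers K b" "coprime (H.ord u) (K.ord b)"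
proof -
  obtain k :: nat where k: "u [^]\<^bsub>H\<^esub> k = \<one>\<^bsub>H\<^esub>" "v [^]\<^bsub>K\<^esub> k = b"
    using assms(5) by (auto simp: nat_powers_DirProd)
  have "nat_powers K b \<subseteq> nat_powers K v" using K.nat_powers_pow_subset[OF assms(4), of k] k(2) by simp
  then show v: "nat_powers K v = nat_powers K b"
    using K.max_cyclic_subgroup_nat_powers_eq[OF finite_K assms(2,4)] by simp
  have "coprime k (K.ord v)"
    using K.coprime_exponent_if_nat_powers_pow_eq[OF finite_K assms(4)] k(2) v by simp
  moreover have "K.ord v = K.ord b" using v K.card_nat_powers[OF finite_K] assms(1,4) by metis
  moreover have "H.ord u dvd k" using H.pow_eq_id[OF assms(3)] k(1) by simp
  ultimately show "coprime (H.ord u) (K.ord b)" using coprime_divisors[of "H.ord u" k] by auto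
qed

lemma max_cyclic_subgroup_one_Times:
  assumes "Factorial_Ring.prime p" "order H = p ^ n" "max_cyclic_subgroup K B" "p dvd card B"
  shows "max_cyclic_subgroup (H \<times>\<times> K) ({\<one>\<^bsub>H\<^esub>} \<times> B)"
proof -
  obtain b where b: "b \<in> carrier K" "B = nat_powers K b" using K.max_cyclic_subgroupE[OF finite_K assms(3)] .
  have p_b: "p dvd K.ord b" using assms(4) b K.card_nat_powers[OF finite_K] by simp
  have "max_cyclic_subgroup (H \<times>\<times> K) (nat_powers (H \<times>\<times> K) (\<one>\<^bsub>H\<^esub>, b))"
  proof (rule HK.max_cyclic_subgroupI[OF finite_HK])
    fix z assume z: "z \<in> carrier (H \<times>\<times> K)" "nat_powers (H \<times>\<times> K) (\<one>\<^bsub>H\<^esub>, b) \<subseteq> nat_powers (H \<times>\<times> K) z"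
    obtain u v where uv: "z = (u, v)" "u \<in> carrier H" "v \<in> carrier K" using z(1) by (cases z) simp
    have "(\<one>\<^bsub>H\<^esub>, b) \<in> nat_powers (H \<times>\<times> K) (u, v)"
      using z(2) uv(1) HK.mem_nat_powers_self[of "(\<one>\<^bsub>H\<^esub>, b)"] b(1) by auto
    note one_pair = one_pair_mem_nat_powers_DirProd[OF b(1) assms(3)[unfolded b(2)] uv(2,3) this]
    obtain i where i: "H.ord u = p ^ i"
      using H.ord_dvd_group_order[OF uv(2)] assms(2) divides_primepow_nat[OF assms(1)] by auto
    have "\<not> p dvd H.ord u"
      using coprime_common_divisor[OF one_pair(2) _ p_b] assms(1) by (metis not_prime_unit)
    then have "H.ord u = 1" using i by (cases i) auto
    then have "u = \<one>\<^bsub>H\<^esub>" using H.ord_eq_1[OF uv(2)] by simp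
    then show "nat_powers (H \<times>\<times> K) z = nat_powers (H \<times>\<times> K) (\<one>\<^bsub>H\<^esub>, b)"
      using uv(1) one_pair(1) by (simp add: nat_powers_DirProd_one_left)
  qed (use b in simp)
  then show ?thesis using b(2) by (simp add: nat_powers_DirProd_one_left)
qed

lemma max_cyclic_subgroup_Times_one:
  assumes "Factorial_Ring.prime p" "order K = p ^ n" "max_cyclic_subgroup H A" "p dvd card A"
  shows "max_cyclic_subgroup (H \<times>\<times> K) (A \<times> {\<one>\<^bsub>K\<^esub>})"
proof -
  interpret KH: two_finite_groups K H by unfold_locales (fact finite_K finite_H)+
  have "max_cyclic_subgroup (K \<times>\<times> H) ({\<one>\<^bsub>K\<^esub>} \<times> A)"
    by (rule KH.max_cyclic_subgroup_one_Times[OF assms])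
  then show ?thesis using KH.max_cyclic_subgroup_swap by (metis product_swap)
qed

abbreviation proj_classes :: "('a set set \<times> 'b set set) set" where
  "proj_classes \<equiv> proj_conj_classes H K ` max_cyclic_subgroups (H \<times>\<times> K)"

abbreviation factor_class_pairs :: "('a set set \<times> 'b set set) set" where
  "factor_class_pairs \<equiv> conj_class H ` max_cyclic_subgroups H \<times> conj_class K ` max_cyclic_subgroups K"

lemma card_factor_class_pairs: "card factor_class_pairs = eta H * eta K"
  by (simp add: H.eta_eq_card_conj_classes[OF finite_H] K.eta_eq_card_conj_classes[OF finite_K]
      card_cartesian_product)

lemma finite_proj_classes: "finite proj_classes"
  using HK.finite_max_cyclic_subgroups[OF finite_HK] by simp

lemma card_proj_classes_le_eta: "card proj_classes \<le> eta (H \<times>\<times> K)"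
proof -
  have "proj_classes = (\<lambda>\<C>. ((`) fst ` \<C>, (`) snd ` \<C>)) ` conj_class (H \<times>\<times> K) ` max_cyclic_subgroups (H \<times>\<times> K)"
    unfolding proj_conj_classes_def image_image conj_class_DirProd_fst conj_class_DirProd_snd ..
  then show ?thesis
    using HK.eta_eq_card_conj_classes[OF finite_HK] HK.finite_max_cyclic_subgroups[OF finite_HK]
    by (simp add: card_image_le)
qed

lemma card_le_eta_if_subset_proj_classes: "S \<subseteq> proj_classes \<Longrightarrow> card S \<le> eta (H \<times>\<times> K)"
  using card_mono[OF finite_proj_classes] card_proj_classes_le_eta by (rule le_trans)

lemma factor_class_pairs_subset_proj_classes: "factor_class_pairs \<subseteq> proj_classes"
proof clarify
  fix A B assume "A \<in> max_cyclic_subgroups H" "B \<in> max_cyclic_subgroups K"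
  then obtain C where "max_cyclic_subgroup (H \<times>\<times> K) C" "fst ` C = A" "snd ` C = B"
    using ex_max_cyclic_subgroup_DirProd_projections unfolding max_cyclic_subgroups_def by blast
  then show "(conj_class H A, conj_class K B) \<in> proj_classes"
    unfolding proj_conj_classes_def max_cyclic_subgroups_def by force
qed

lemma one_Times_subset_proj_classes:
  assumes "Factorial_Ring.prime p" "order H = p ^ n"
  shows "{{{\<one>\<^bsub>H\<^esub>}}} \<times> conj_class K ` {B \<in> max_cyclic_subgroups K. p dvd card B} \<subseteq> proj_classes"
proof clarify
  fix B assume B: "B \<in> max_cyclic_subgroups K" "p dvd card B"
  then have "{\<one>\<^bsub>H\<^esub>} \<times> B \<in> max_cyclic_subgroups (H \<times>\<times> K)"
    using max_cyclic_subgroup_one_Times[OF assms] unfolding max_cyclic_subgroups_def by blast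
  moreover have "B \<noteq> {}" using K.max_cyclic_subgroup_nonempty[OF finite_K] B(1)
    unfolding max_cyclic_subgroups_def by blast
  ultimately show "({{\<one>\<^bsub>H\<^esub>}}, conj_class K B) \<in> proj_classes"
    unfolding proj_conj_classes_def using H.conj_class_one by (intro image_eqI) auto
qed

lemma Times_one_subset_proj_classes:
  assumes "Factorial_Ring.prime p" "order K = p ^ n"
  shows "conj_class H ` {A \<in> max_cyclic_subgroups H. p dvd card A} \<times> {{{\<one>\<^bsub>K\<^esub>}}} \<subseteq> proj_classes"
proof clarify
  fix A assume A: "A \<in> max_cyclic_subgroups H" "p dvd card A"
  then have "A \<times> {\<one>\<^bsub>K\<^esub>} \<in> max_cyclic_subgroups (H \<times>\<times> K)"
    using max_cyclic_subgroup_Times_one[OF assms] unfolding max_cyclic_subgroups_def by blast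
  moreover have "A \<noteq> {}" using H.max_cyclic_subgroup_nonempty[OF finite_H] A(1)
    unfolding max_cyclic_subgroups_def by blast
  ultimately show "(conj_class H A, {{\<one>\<^bsub>K\<^esub>}}) \<in> proj_classes"
    unfolding proj_conj_classes_def using K.conj_class_one by (intro image_eqI) auto
qed

lemma proj_classes_subset_if_coprime:
  assumes "coprime (order H) (order K)"
  shows "proj_classes \<subseteq> factor_class_pairs"
proof (rule image_subsetI)
  fix C assume "C \<in> max_cyclic_subgroups (H \<times>\<times> K)"
  then have "max_cyclic_subgroup H (fst ` C)" "max_cyclic_subgroup K (snd ` C)"
    using max_cyclic_subgroup_DirProd_coprime(2,3)[OF assms] unfolding max_cyclic_subgroups_def by blast+
  then show "proj_conj_classes H K C \<in> factor_class_pairs"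
    unfolding proj_conj_classes_def max_cyclic_subgroups_def by blast
qed

lemma eta_le_card_proj_classes_if_coprime:
  assumes "coprime (order H) (order K)"
  shows "eta (H \<times>\<times> K) \<le> card proj_classes"
proof -
  have "conj_class (H \<times>\<times> K) C = (\<lambda>(\<A>, \<B>). (\<lambda>(P, Q). P \<times> Q) ` (\<A> \<times> \<B>)) (proj_conj_classes H K C)"
    if "C \<in> max_cyclic_subgroups (H \<times>\<times> K)" for C
  proof -
    have "C = fst ` C \<times> snd ` C"
      using max_cyclic_subgroup_DirProd_coprime(1)[OF assms] that unfolding max_cyclic_subgroups_def by blast
    then have "conj_class (H \<times>\<times> K) C = conj_class (H \<times>\<times> K) (fst ` C \<times> snd ` C)" by simp
    then show ?thesis by (simp add: conj_class_DirProd_Times proj_conj_classes_def)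
  qed
  then have "conj_class (H \<times>\<times> K) ` max_cyclic_subgroups (H \<times>\<times> K)
      = (\<lambda>(\<A>, \<B>). (\<lambda>(P, Q). P \<times> Q) ` (\<A> \<times> \<B>)) ` proj_classes"
    unfolding image_image by (rule image_cong[OF refl])
  then show ?thesis
    using HK.eta_eq_card_conj_classes[OF finite_HK] finite_proj_classes by (simp add: card_image_le)
qed

lemma eta_DirProd_ge: "eta H * eta K \<le> eta (H \<times>\<times> K)"
  using card_le_eta_if_subset_proj_classes[OF factor_class_pairs_subset_proj_classes]
  by (simp add: card_factor_class_pairs)

lemma eta_DirProd_eq_if_coprime:
  assumes "coprime (order H) (order K)"
  shows "eta (H \<times>\<times> K) = eta H * eta K"
proof -
  have "eta (H \<times>\<times> K) \<le> card proj_classes" by (rule eta_le_card_proj_classes_if_coprime[OF assms])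
  also have "\<dots> \<le> card factor_class_pairs"
    using proj_classes_subset_if_coprime[OF assms] H.finite_max_cyclic_subgroups[OF finite_H]
      K.finite_max_cyclic_subgroups[OF finite_K]
    by (intro card_mono) auto
  finally show ?thesis using eta_DirProd_ge card_factor_class_pairs by simp
qed

lemma eta_DirProd_ge_p_group_left:
  assumes "Factorial_Ring.prime p" "order H = p ^ n" "order H > 1"
  shows "eta H * eta K + eta_p p K \<le> eta (H \<times>\<times> K)"
proof -
  let ?E = "{{{\<one>\<^bsub>H\<^esub>}}} \<times> conj_class K ` {B \<in> max_cyclic_subgroups K. p dvd card B}"
  have sub: "factor_class_pairs \<union> ?E \<subseteq> proj_classes"
    using factor_class_pairs_subset_proj_classes one_Times_subset_proj_classes[OF assms(1,2)] by blast
  have "finite (factor_class_pairs \<union> ?E)" using finite_subset[OF sub finite_proj_classes] .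
  then have fin: "finite factor_class_pairs" "finite ?E" by simp_all
  have disj: "factor_class_pairs \<inter> ?E = {}"
    using H.one_conj_class_notin_conj_classes[OF finite_H assms(3)] by blast
  have "card (factor_class_pairs \<union> ?E) = card factor_class_pairs + card ?E"
    by (rule card_Un_disjoint[OF fin disj])
  also have "\<dots> = eta H * eta K + eta_p p K"
    by (simp only: card_factor_class_pairs)
      (simp add: card_cartesian_product K.eta_p_eq_card_conj_classes[OF finite_K])
  finally have "card (factor_class_pairs \<union> ?E) = eta H * eta K + eta_p p K" .
  then show ?thesis using card_le_eta_if_subset_proj_classes[OF sub] by simp
qed

lemma ex_max_cyclic_subgroup_snd_eq_prime_not_dvd_fst:
  assumes "Factorial_Ring.prime p" "max_cyclic_subgroup K B" "p dvd card B"
  obtains C where "max_cyclic_subgroup (H \<times>\<times> K) C" "snd ` C = B" "\<not> p dvd card (fst ` C)"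
proof -
  obtain b where b: "b \<in> carrier K" "B = nat_powers K b" using K.max_cyclic_subgroupE[OF finite_K assms(2)] .
  obtain C where C: "max_cyclic_subgroup (H \<times>\<times> K) C" "nat_powers (H \<times>\<times> K) (\<one>\<^bsub>H\<^esub>, b) \<subseteq> C"
    using HK.ex_max_cyclic_subgroup_supset[OF finite_HK, of "(\<one>\<^bsub>H\<^esub>, b)"] b(1) by auto
  obtain u v where uv: "u \<in> carrier H" "v \<in> carrier K" "C = nat_powers (H \<times>\<times> K) (u, v)"
    using max_cyclic_subgroup_DirProdE[OF C(1)] .
  have "(\<one>\<^bsub>H\<^esub>, b) \<in> C" using C(2) HK.mem_nat_powers_self[of "(\<one>\<^bsub>H\<^esub>, b)"] b(1) by auto
  note one_pair = one_pair_mem_nat_powers_DirProd[OF b(1) assms(2)[unfolded b(2)] uv(1,2) this[unfolded uv(3)]]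
  have "p dvd K.ord b" using assms(3) b K.card_nat_powers[OF finite_K] by simp
  have "\<not> p dvd H.ord u"
  proof
    assume "p dvd H.ord u"
    then have "is_unit p" using coprime_common_divisor[OF one_pair(2) _ \<open>p dvd K.ord b\<close>] by blast
    then show False using assms(1) by simp
  qed
  moreover have "fst ` C = nat_powers H u" "snd ` C = B"
    using uv(3) one_pair(1) b(2) by (simp_all add: fst_nat_powers_DirProd snd_nat_powers_DirProd)
  ultimately show thesis using that C(1) H.card_nat_powers[OF finite_H uv(1)] by simp
qed

lemma not_inj_on_snd_proj_classes:
  assumes "Factorial_Ring.prime p" "p dvd order H" "p dvd order K"
  shows "\<not> inj_on snd proj_classes"
proof -
  obtain B where B: "max_cyclic_subgroup K B" "p dvd card B"
    using K.ex_max_cyclic_subgroup_prime_dvd_card[OF finite_K assms(1,3)] .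
  obtain C0 where C0: "max_cyclic_subgroup (H \<times>\<times> K) C0" "snd ` C0 = B" "\<not> p dvd card (fst ` C0)"
    using ex_max_cyclic_subgroup_snd_eq_prime_not_dvd_fst[OF assms(1) B] .
  obtain A where A: "max_cyclic_subgroup H A" "p dvd card A"
    using H.ex_max_cyclic_subgroup_prime_dvd_card[OF finite_H assms(1,2)] .
  obtain C1 where C1: "max_cyclic_subgroup (H \<times>\<times> K) C1" "fst ` C1 = A" "snd ` C1 = B"
    using ex_max_cyclic_subgroup_DirProd_projections[OF A(1) B(1)] .
  have "fst ` C0 \<subseteq> carrier H" "A \<subseteq> carrier H"
    using HK.max_cyclic_subgroup_subset_carrier[OF finite_HK C0(1)]
      H.max_cyclic_subgroup_subset_carrier[OF finite_H A(1)] by auto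
  then have "conj_class H (fst ` C0) \<noteq> conj_class H A"
    using H.card_eq_if_conj_class_eq A(2) C0(3) by metis
  then have "proj_conj_classes H K C0 \<noteq> proj_conj_classes H K C1"
    "snd (proj_conj_classes H K C0) = snd (proj_conj_classes H K C1)"
    using C0(2) C1(2,3) by (simp_all add: proj_conj_classes_def)
  moreover have "proj_conj_classes H K C0 \<in> proj_classes" "proj_conj_classes H K C1 \<in> proj_classes"
    using C0(1) C1(1) unfolding max_cyclic_subgroups_def by blast+
  ultimately show ?thesis unfolding inj_on_def by blast
qed

lemma conj_classes_subset_snd_proj_classes:
  "conj_class K ` max_cyclic_subgroups K \<subseteq> snd ` proj_classes"
proof (rule image_subsetI)
  fix B assume "B \<in> max_cyclic_subgroups K"
  moreover obtain A where "max_cyclic_subgroup H A"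
    using H.ex_max_cyclic_subgroup_supset[OF finite_H H.one_closed] by blast
  ultimately have "(conj_class H A, conj_class K B) \<in> proj_classes"
    using factor_class_pairs_subset_proj_classes unfolding max_cyclic_subgroups_def by blast
  then show "conj_class K B \<in> snd ` proj_classes" by (rule rev_image_eqI) simp
qed

lemma eta_DirProd_gt:
  assumes "Factorial_Ring.prime p" "p dvd order H" "p dvd order K"
  shows "eta K < eta (H \<times>\<times> K)"
proof -
  have "eta K \<le> card (snd ` proj_classes)"
    using K.eta_eq_card_conj_classes[OF finite_K] finite_proj_classes conj_classes_subset_snd_proj_classes
    by (simp add: card_mono)
  also have "\<dots> < card proj_classes"
    using not_inj_on_snd_proj_classes[OF assms] card_image_le[OF finite_proj_classes, of snd]
      inj_on_iff_eq_card[OF finite_proj_classes, of snd] by linarith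
  also have "\<dots> \<le> eta (H \<times>\<times> K)" by (rule card_proj_classes_le_eta)
  finally show ?thesis .
qed

lemma eta_DirProd_ge_p_groups:
  assumes "Factorial_Ring.prime p" "order H = p ^ n" "order K = p ^ m" "order H > 1" "order K > 1"
  shows "eta H * eta K + eta H + eta K \<le> eta (H \<times>\<times> K)"
proof -
  let ?EK = "{{{\<one>\<^bsub>H\<^esub>}}} \<times> conj_class K ` max_cyclic_subgroups K"
  let ?EH = "conj_class H ` max_cyclic_subgroups H \<times> {{{\<one>\<^bsub>K\<^esub>}}}"
  have "{A \<in> max_cyclic_subgroups H. p dvd card A} = max_cyclic_subgroups H"
    "{B \<in> max_cyclic_subgroups K. p dvd card B} = max_cyclic_subgroups K"
    using H.prime_dvd_card_max_cyclic_subgroup[OF finite_H assms(1,2,4)]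
      K.prime_dvd_card_max_cyclic_subgroup[OF finite_K assms(1,3,5)]
    unfolding max_cyclic_subgroups_def by blast+
  then have sub: "factor_class_pairs \<union> ?EK \<union> ?EH \<subseteq> proj_classes"
    using factor_class_pairs_subset_proj_classes one_Times_subset_proj_classes[OF assms(1,2)]
      Times_one_subset_proj_classes[OF assms(1,3)] by auto
  have "finite (factor_class_pairs \<union> ?EK \<union> ?EH)" using finite_subset[OF sub finite_proj_classes] .
  then have fin: "finite factor_class_pairs" "finite ?EK" "finite ?EH" by simp_all
  note H.one_conj_class_notin_conj_classes[OF finite_H assms(4)]
    K.one_conj_class_notin_conj_classes[OF finite_K assms(5)]
  then have disj: "factor_class_pairs \<inter> ?EK = {}" "(factor_class_pairs \<union> ?EK) \<inter> ?EH = {}" by auto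
  have "card (factor_class_pairs \<union> ?EK \<union> ?EH) = card factor_class_pairs + card ?EK + card ?EH"
    using card_Un_disjoint[OF fin(1,2) disj(1)] card_Un_disjoint[OF _ fin(3) disj(2)] fin by simp
  also have "\<dots> = eta H * eta K + eta K + eta H"
    by (simp only: card_factor_class_pairs)
      (simp add: card_cartesian_product H.eta_eq_card_conj_classes[OF finite_H]
        K.eta_eq_card_conj_classes[OF finite_K])
  finally have "card (factor_class_pairs \<union> ?EK \<union> ?EH) = eta H * eta K + eta K + eta H" .
  then show ?thesis using card_le_eta_if_subset_proj_classes[OF sub] by simp
qed

end

theorem lemma2p1:
  fixes H :: "('a, 'c) monoid_scheme" and K :: "('b, 'd) monoid_scheme"
  assumes "group H" "group K" "finite (carrier H)" "finite (carrier K)"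
  shows "eta (H \<times>\<times> K) \<ge> eta H * eta K
    \<and> (coprime (order H) (order K) \<longrightarrow> eta (H \<times>\<times> K) = eta H * eta K)
    \<and> (\<forall>p. Factorial_Ring.prime p \<and> p dvd order K \<and> p_group p H \<and> order H > 1 \<longrightarrow>
           eta (H \<times>\<times> K) \<ge> eta H * eta K + eta_p p K \<and> eta H * eta K + eta_p p K > eta H * eta K)
    \<and> (\<forall>p. nilpotent_group H \<and> Factorial_Ring.prime p \<and> p dvd order H \<and> p dvd order K \<longrightarrow>
           eta (H \<times>\<times> K) > eta K)
    \<and> (\<forall>p. p_group p H \<and> p_group p K \<and> order H > 1 \<and> order K > 1 \<longrightarrow>
           eta (H \<times>\<times> K) \<ge> eta H * eta K + eta H + eta K)"
proof -
  interpret two_finite_groups H K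
    using assms by (simp add: two_finite_groups_def two_finite_groups_axioms_def)
  show ?thesis
  proof (intro conjI allI impI)
    show "eta H * eta K \<le> eta (H \<times>\<times> K)" by (rule eta_DirProd_ge)
  next
    assume "coprime (order H) (order K)"
    then show "eta (H \<times>\<times> K) = eta H * eta K" by (rule eta_DirProd_eq_if_coprime)
  next
    fix p assume p: "Factorial_Ring.prime p \<and> p dvd order K \<and> p_group p H \<and> order H > 1"
    then show "eta H * eta K + eta_p p K \<le> eta (H \<times>\<times> K)"
      using eta_DirProd_ge_p_group_left unfolding p_group_def by blast
    show "eta H * eta K < eta H * eta K + eta_p p K" using K.eta_p_pos[OF finite_K] p by simp
  next
    fix p assume "nilpotent_group H \<and> Factorial_Ring.prime p \<and> p dvd order H \<and> p dvd order K"
    then show "eta K < eta (H \<times>\<times> K)" using eta_DirProd_gt by blast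
  next
    fix p assume "p_group p H \<and> p_group p K \<and> order H > 1 \<and> order K > 1"
    then show "eta H * eta K + eta H + eta K \<le> eta (H \<times>\<times> K)"
      using eta_DirProd_ge_p_groups unfolding p_group_def by blast
  qed
qed

end
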